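(* Let $A_0$ be a commutative ring, $d_1,\dots,d_g\in\mathbb{N}$, and let $A=A_0[Y_1,\dots,Y_g]$ be $\mathbb{Z}^2$-graded by $\deg Y_j=(d_j,1)$. Let $F$ be a finitely generated $\mathbb{Z}^2$-graded free $A$-module with homogeneous basis $e_1,\dots,e_p$, let $<$ be a monomial order on $F$, and let $U$ be a $\mathbb{Z}^2$-graded $A$-submodule of $F$. Then $\rho_{F/U}(v)=\rho_{F/\operatorname{in}_<(U)}(v)$ for all $v\in\mathbb{Z}$.
   Context: For a $\mathbb{Z}^2$-graded $A$-module $N$ and $v\in\mathbb{Z}$, $\rho_N(v)=\sup\{i\in\mathbb{Z} : N_{(i,v)}\neq0\}\in\mathbb{Z}\cup\{\pm\infty\}$. Monomials of $F$ are the elements $Y^\alpha e_k$ ($\alpha\in\mathbb{N}^g$); a monomial order on $F$ is a well-ordering of these monomials compatible with multiplication by monomials of $A$ (if $Y^\alpha e_k<Y^\beta e_l$ then $Y^\gamma Y^\alpha e_k<Y^\gamma Y^\beta e_l$). Writing a nonzero $u\in F$ as an $A_0$-linear combination of distinct monomials, its leading term $\operatorname{in}_<(u)=aY^\alpha e_k$ is the largest monomial occurring together with its (nonzero) coefficient $a\in A_0$. $\operatorname{in}_<(U)$ is the $A_0$-submodule of $F$ generated by the leading terms (with coefficients) of all nonzero elements of $U$; it is an $A$-submodule of $F$. *)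

theory Defs
  imports Main "HOL-Library.Extended_Real"
begin

text \<open>
A_0 is a commutative ring (type 'a). A = A_0[Y_0,...,Y_{g-1}] (0-based indices),
deg Y_j = (d j, 1). F is the free A-module with basis e_0,...,e_{p-1}, deg e_k = ed k.
Elements of F are represented by their coefficient functions on monomials Y^alpha e_k,
a monomial being a pair (alpha, k) with alpha :: nat => nat an exponent vector with
alpha j = 0 for j >= g, and k < p.  Elements of F are the finitely supported such
coefficient functions supported on monomials.
\<close>

type_synonym mon = "(nat \<Rightarrow> nat) \<times> nat"

definition monoms :: "nat \<Rightarrow> nat \<Rightarrow> mon set" where
  "monoms g p = {(\<alpha>, k). (\<forall>j\<ge>g. \<alpha> j = 0) \<and> k < p}"

definition expos :: "nat \<Rightarrow> (nat \<Rightarrow> nat) set" where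
  "expos g = {\<gamma>. \<forall>j\<ge>g. \<gamma> j = 0}"

definition supp :: "(mon \<Rightarrow> 'a::zero) \<Rightarrow> mon set" where
  "supp f = {m. f m \<noteq> 0}"

definition freemod :: "nat \<Rightarrow> nat \<Rightarrow> (mon \<Rightarrow> 'a::zero) set" where
  "freemod g p = {f. finite (supp f) \<and> supp f \<subseteq> monoms g p}"

definition mdeg :: "nat \<Rightarrow> (nat \<Rightarrow> nat) \<Rightarrow> (nat \<Rightarrow> int \<times> int) \<Rightarrow> mon \<Rightarrow> int \<times> int" where
  "mdeg g d ed m = (int (\<Sum>j<g. d j * fst m j) + fst (ed (snd m)),
                    int (\<Sum>j<g. fst m j) + snd (ed (snd m)))"

text \<open>Multiplication of an element of F by the monomial Y^gamma of A.\<close>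
definition mmul :: "(nat \<Rightarrow> nat) \<Rightarrow> (mon \<Rightarrow> 'a::zero) \<Rightarrow> mon \<Rightarrow> 'a" where
  "mmul \<gamma> f = (\<lambda>(\<beta>, k). if (\<forall>j. \<gamma> j \<le> \<beta> j) then f (\<lambda>j. \<beta> j - \<gamma> j, k) else 0)"

definition madd :: "(mon \<Rightarrow> 'a::plus) \<Rightarrow> (mon \<Rightarrow> 'a) \<Rightarrow> mon \<Rightarrow> 'a" where
  "madd f h = (\<lambda>m. f m + h m)"

definition msmul :: "'a::times \<Rightarrow> (mon \<Rightarrow> 'a) \<Rightarrow> mon \<Rightarrow> 'a" where
  "msmul c f = (\<lambda>m. c * f m)"

definition hcomp :: "nat \<Rightarrow> (nat \<Rightarrow> nat) \<Rightarrow> (nat \<Rightarrow> int \<times> int) \<Rightarrow> int \<times> int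
    \<Rightarrow> (mon \<Rightarrow> 'a::zero) \<Rightarrow> mon \<Rightarrow> 'a" where
  "hcomp g d ed \<delta> f = (\<lambda>m. if mdeg g d ed m = \<delta> then f m else 0)"

definition homog :: "nat \<Rightarrow> nat \<Rightarrow> (nat \<Rightarrow> nat) \<Rightarrow> (nat \<Rightarrow> int \<times> int) \<Rightarrow> int \<Rightarrow> int
    \<Rightarrow> (mon \<Rightarrow> 'a::zero) \<Rightarrow> bool" where
  "homog g p d ed i v f \<longleftrightarrow> f \<in> freemod g p \<and> (\<forall>m\<in>supp f. mdeg g d ed m = (i, v))"

text \<open>A-submodule of F (A is generated as A_0-module by the monomials Y^gamma).\<close>
definition submod :: "nat \<Rightarrow> nat \<Rightarrow> (mon \<Rightarrow> 'a::comm_ring_1) set \<Rightarrow> bool" where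
  "submod g p U \<longleftrightarrow> U \<subseteq> freemod g p \<and> (\<lambda>_. 0) \<in> U
     \<and> (\<forall>f\<in>U. \<forall>h\<in>U. madd f h \<in> U)
     \<and> (\<forall>c. \<forall>f\<in>U. msmul c f \<in> U)
     \<and> (\<forall>\<gamma>\<in>expos g. \<forall>f\<in>U. mmul \<gamma> f \<in> U)"

definition graded_submod :: "nat \<Rightarrow> nat \<Rightarrow> (nat \<Rightarrow> nat) \<Rightarrow> (nat \<Rightarrow> int \<times> int)
    \<Rightarrow> (mon \<Rightarrow> 'a::comm_ring_1) set \<Rightarrow> bool" where
  "graded_submod g p d ed U \<longleftrightarrow> submod g p U \<and> (\<forall>u\<in>U. \<forall>\<delta>. hcomp g d ed \<delta> u \<in> U)"

definition monomial_order :: "nat \<Rightarrow> nat \<Rightarrow> (mon \<Rightarrow> mon \<Rightarrow> bool) \<Rightarrow> bool" where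
  "monomial_order g p mless \<longleftrightarrow>
     (\<forall>m\<in>monoms g p. \<not> mless m m)
     \<and> (\<forall>m1\<in>monoms g p. \<forall>m2\<in>monoms g p. \<forall>m3\<in>monoms g p.
           mless m1 m2 \<longrightarrow> mless m2 m3 \<longrightarrow> mless m1 m3)
     \<and> (\<forall>m1\<in>monoms g p. \<forall>m2\<in>monoms g p. m1 = m2 \<or> mless m1 m2 \<or> mless m2 m1)
     \<and> wf {(m1, m2). m1 \<in> monoms g p \<and> m2 \<in> monoms g p \<and> mless m1 m2}
     \<and> (\<forall>\<gamma>\<in>expos g. \<forall>\<alpha> k \<beta> l. (\<alpha>, k) \<in> monoms g p \<longrightarrow> (\<beta>, l) \<in> monoms g p \<longrightarrow>
           mless (\<alpha>, k) (\<beta>, l) \<longrightarrow> mless (\<lambda>j. \<gamma> j + \<alpha> j, k) (\<lambda>j. \<gamma> j + \<beta> j, l))"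

definition lead_mon :: "(mon \<Rightarrow> mon \<Rightarrow> bool) \<Rightarrow> (mon \<Rightarrow> 'a::zero) \<Rightarrow> mon" where
  "lead_mon mless u = (THE m. m \<in> supp u \<and> (\<forall>m'\<in>supp u. m' \<noteq> m \<longrightarrow> mless m' m))"

definition lead_term :: "(mon \<Rightarrow> mon \<Rightarrow> bool) \<Rightarrow> (mon \<Rightarrow> 'a::zero) \<Rightarrow> mon \<Rightarrow> 'a" where
  "lead_term mless u = (\<lambda>m. if m = lead_mon mless u then u m else 0)"

inductive_set A0_span :: "(mon \<Rightarrow> 'a::comm_ring_1) set \<Rightarrow> (mon \<Rightarrow> 'a) set"
  for S where
  zero: "(\<lambda>_. 0) \<in> A0_span S"
| step: "s \<in> S \<Longrightarrow> x \<in> A0_span S \<Longrightarrow> madd (msmul c s) x \<in> A0_span S"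

definition init_mod :: "(mon \<Rightarrow> mon \<Rightarrow> bool) \<Rightarrow> (mon \<Rightarrow> 'a::comm_ring_1) set \<Rightarrow> (mon \<Rightarrow> 'a) set" where
  "init_mod mless U = A0_span {lead_term mless u | u. u \<in> U \<and> u \<noteq> (\<lambda>_. 0)}"

text \<open>rho_{F/N}(v) = sup {i. (F/N)_(i,v) \<noteq> 0}, where for a graded submodule N,
  (F/N)_(i,v) = F_(i,v) / N_(i,v) is nonzero iff some homogeneous element of F of
  degree (i,v) is not in N.  Value in the extended reals (Sup {} = -\<infinity>).\<close>
definition rho :: "nat \<Rightarrow> nat \<Rightarrow> (nat \<Rightarrow> nat) \<Rightarrow> (nat \<Rightarrow> int \<times> int)
    \<Rightarrow> (mon \<Rightarrow> 'a::comm_ring_1) set \<Rightarrow> int \<Rightarrow> ereal" where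
  "rho g p d ed N v = Sup {ereal (real_of_int i) | i. \<exists>f. homog g p d ed i v f \<and> f \<notin> N}"

end

theory Submission
  imports Defs
begin

text \<open>
  For every bidegree \<delta> the component F_\<delta> lies in U if and only if it lies in in_<(U);
  hence (F/U)_\<delta> and (F/in_<(U))_\<delta> vanish for the same \<delta>, and the two suprema agree.
  Both conditions say that every monomial of degree \<delta> lies in the module, since the monomials
  span F_\<delta> over A_0. A monomial in U is its own leading term, so it lies in in_<(U).
  Conversely, if a monomial m of degree \<delta> lies in in_<(U), then some u \<in> U has coefficient 1
  at m and only smaller monomials otherwise; the degree-\<delta> component of u is m plus lower
  monomials of degree \<delta>, which lie in U by induction along the well-order.
  No division by coefficients is needed, so A_0 may be any commutative ring.
\<close>

definition mon_vec :: "mon \<Rightarrow> mon \<Rightarrow> 'a::comm_ring_1" where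
  "mon_vec m = (\<lambda>x. if x = m then 1 else 0)"

definition homog_part :: "nat \<Rightarrow> nat \<Rightarrow> (nat \<Rightarrow> nat) \<Rightarrow> (nat \<Rightarrow> int \<times> int) \<Rightarrow> int \<Rightarrow> int
    \<Rightarrow> (mon \<Rightarrow> 'a::zero) set" where
  "homog_part g p d ed i v = {f. homog g p d ed i v f}"

lemma supp_mon_vec [simp]: "supp (mon_vec m :: mon \<Rightarrow> 'a::comm_ring_1) = {m}"
  by (auto simp: supp_def mon_vec_def)

lemma mon_vec_nonzero: "mon_vec m \<noteq> (\<lambda>_. 0 :: 'a::comm_ring_1)"
  by (metis mon_vec_def zero_neq_one)

lemma sum_mon_vec_apply:
  "finite T \<Longrightarrow> (\<Sum>t\<in>T. c t * (mon_vec t x :: 'a::comm_ring_1)) = (if x \<in> T then c x else 0)"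
  by (simp add: mon_vec_def if_distrib[of "\<lambda>z. c _ * z"] sum.delta cong: if_cong)

lemma expand_mon_vec:
  fixes f :: "mon \<Rightarrow> 'a::comm_ring_1"
  assumes "finite (supp f)"
  shows "f = (\<lambda>x. \<Sum>t\<in>supp f. f t * mon_vec t x)"
  using assms by (auto simp: fun_eq_iff sum_mon_vec_apply supp_def)

lemma mon_vec_in_homog_part:
  "m \<in> monoms g p \<Longrightarrow> mdeg g d ed m = (i, v) \<Longrightarrow> mon_vec m \<in> homog_part g p d ed i v"
  by (simp add: homog_part_def homog_def freemod_def)

lemma A0_span_mon_vec_sum:
  assumes "finite T" "\<forall>t\<in>T. mon_vec t \<in> S"
  shows "(\<lambda>x. \<Sum>t\<in>T. c t * mon_vec t x) \<in> A0_span S"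
  using assms
proof (induction T rule: finite_induct)
  case empty
  then show ?case using A0_span.zero by simp
next
  case (insert t T)
  have "(\<lambda>x. \<Sum>t\<in>insert t T. c t * mon_vec t x)
      = madd (msmul (c t) (mon_vec t)) (\<lambda>x. \<Sum>t\<in>T. c t * mon_vec t x)"
    using insert.hyps by (simp add: madd_def msmul_def fun_eq_iff)
  then show ?case using insert by (simp add: A0_span.step)
qed

lemma A0_span_subset_submod:
  assumes "submod g p U" "S \<subseteq> U"
  shows "A0_span S \<subseteq> U"
proof
  fix x assume "x \<in> A0_span S"
  then show "x \<in> U"
    by induction (use assms in \<open>auto simp: submod_def\<close>)
qed

lemma homog_part_subset_A0_span:
  assumes "\<forall>m\<in>monoms g p. mdeg g d ed m = (i, v) \<longrightarrow> mon_vec m \<in> S"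
  shows "homog_part g p d ed i v \<subseteq> A0_span S"
proof
  fix f :: "mon \<Rightarrow> 'a" assume "f \<in> homog_part g p d ed i v"
  then have fin: "finite (supp f)" and "\<forall>t\<in>supp f. mon_vec t \<in> S"
    using assms by (auto simp: homog_part_def homog_def freemod_def)
  then have "(\<lambda>x. \<Sum>t\<in>supp f. f t * mon_vec t x) \<in> A0_span S"
    by (rule A0_span_mon_vec_sum)
  then show "f \<in> A0_span S"
    using expand_mon_vec[OF fin] by simp
qed

lemma monomial_order_irrefl:
  "monomial_order g p mless \<Longrightarrow> m \<in> monoms g p \<Longrightarrow> \<not> mless m m"
  by (drule monomial_order_def[THEN iffD1, THEN conjunct1]) blast

lemma monomial_order_trans:
  "monomial_order g p mless \<Longrightarrow> m1 \<in> monoms g p \<Longrightarrow> m2 \<in> monoms g p \<Longrightarrow> m3 \<in> monoms g p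
    \<Longrightarrow> mless m1 m2 \<Longrightarrow> mless m2 m3 \<Longrightarrow> mless m1 m3"
  by (drule monomial_order_def[THEN iffD1, THEN conjunct2, THEN conjunct1]) blast

lemma monomial_order_total:
  "monomial_order g p mless \<Longrightarrow> m1 \<in> monoms g p \<Longrightarrow> m2 \<in> monoms g p
    \<Longrightarrow> m1 = m2 \<or> mless m1 m2 \<or> mless m2 m1"
  by (drule monomial_order_def[THEN iffD1, THEN conjunct2, THEN conjunct2, THEN conjunct1]) blast

lemma monomial_order_wf:
  "monomial_order g p mless
    \<Longrightarrow> wf {(m1, m2). m1 \<in> monoms g p \<and> m2 \<in> monoms g p \<and> mless m1 m2}"
  by (drule monomial_order_def[THEN iffD1, THEN conjunct2, THEN conjunct2, THEN conjunct2, THEN conjunct1])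

lemma monomial_order_finite_greatest:
  assumes mo: "monomial_order g p mless"
    and "finite S" "S \<noteq> {}" "S \<subseteq> monoms g p"
  shows "\<exists>m\<in>S. \<forall>m'\<in>S - {m}. mless m' m"
  using assms(2-4)
proof (induction S rule: finite_ne_induct)
  case (singleton x)
  then show ?case by simp
next
  case (insert x S)
  then obtain m where m: "m \<in> S" "\<forall>m'\<in>S - {m}. mless m' m"
    by blast
  have x: "x \<in> monoms g p" and mon: "S \<subseteq> monoms g p"
    using insert.prems by auto
  have "x \<noteq> m"
    using m(1) insert.hyps by blast
  then consider "mless x m" | "mless m x"
    using monomial_order_total[OF mo x, of m] m(1) mon by blast
  then show ?case
  proof cases
    case 1
    then have "\<forall>m'\<in>insert x S - {m}. mless m' m"
      using m(2) by blast
    then show ?thesis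
      using m(1) by blast
  next
    case 2
    have "mless m' x" if "m' \<in> S" for m'
    proof (cases "m' = m")
      case False
      then have "mless m' m"
        using that m(2) by blast
      then show ?thesis
        using monomial_order_trans[OF mo _ _ x _ 2] that m(1) mon by blast
    qed (use 2 in simp)
    then show ?thesis
      by blast
  qed
qed

lemma lead_mon_greatest:
  assumes mo: "monomial_order g p mless"
    and u: "u \<in> freemod g p" "u \<noteq> (\<lambda>_. 0)"
  shows "lead_mon mless u \<in> supp u" "\<forall>m'\<in>supp u - {lead_mon mless u}. mless m' (lead_mon mless u)"
proof -
  have fin: "finite (supp u)" and mon: "supp u \<subseteq> monoms g p"
    using u(1) by (auto simp: freemod_def)
  have "supp u \<noteq> {}"
    using u(2) by (auto simp: supp_def)
  then obtain m where m: "m \<in> supp u" "\<forall>m'\<in>supp u - {m}. mless m' m"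
    using monomial_order_finite_greatest[OF mo fin _ mon] by blast
  have uniq: "m' = m" if "m' \<in> supp u" "\<forall>m''\<in>supp u. m'' \<noteq> m' \<longrightarrow> mless m'' m'" for m'
  proof (rule ccontr)
    assume "m' \<noteq> m"
    then have "mless m' m" "mless m m'"
      using that m by auto
    then have "mless m m"
      using monomial_order_trans[OF mo, of m m' m] m(1) that(1) mon by blast
    then show False
      using monomial_order_irrefl[OF mo, of m] m(1) mon by blast
  qed
  have "lead_mon mless u = m"
    unfolding lead_mon_def by (rule the_equality) (use m uniq in blast)+
  then show "lead_mon mless u \<in> supp u" "\<forall>m'\<in>supp u - {lead_mon mless u}. mless m' (lead_mon mless u)"
    using m by simp_all
qed

lemma lead_mon_mon_vec: "lead_mon mless (mon_vec m :: mon \<Rightarrow> 'a::comm_ring_1) = m"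
  unfolding lead_mon_def by (rule the_equality) auto

lemma lead_term_mon_vec: "lead_term mless (mon_vec m) = mon_vec m"
  unfolding lead_term_def lead_mon_mon_vec by (auto simp: mon_vec_def)

text \<open>
  The coefficient at m of an element of in_<(U) is a sum of leading coefficients at m; adding
  up the corresponding elements of U keeps all their other monomials below m.
\<close>
lemma init_mod_coeff_witness:
  assumes mo: "monomial_order g p mless" and U: "submod g p U"
    and x: "x \<in> init_mod mless U"
  shows "\<exists>u\<in>U. u m = x m \<and> (\<forall>m'\<in>supp u - {m}. mless m' m)"
  using x unfolding init_mod_def
proof (induction x rule: A0_span.induct)
  case zero
  then show ?case
    using U by (auto simp: submod_def supp_def)
next
  case (step s x c)
  then obtain u where u: "u \<in> U" "u m = x m" "\<forall>m'\<in>supp u - {m}. mless m' m"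
    by auto
  from step.hyps(1) obtain w where s: "s = lead_term mless w" and w: "w \<in> U" "w \<noteq> (\<lambda>_. 0)"
    by auto
  have "w \<in> freemod g p"
    using w U by (auto simp: submod_def)
  note lead = lead_mon_greatest[OF mo this w(2)]
  show ?case
  proof (cases "lead_mon mless w = m")
    case True
    have "madd (msmul c w) u \<in> U"
      using U w u unfolding submod_def by auto
    moreover have "madd (msmul c w) u m = madd (msmul c s) x m"
      using True s u by (simp add: madd_def msmul_def lead_term_def)
    moreover have "supp (madd (msmul c w) u) \<subseteq> supp w \<union> supp u"
      by (auto simp: supp_def madd_def msmul_def)
    ultimately show ?thesis
      using lead(2) True u(3) by blast
  next
    case False
    then have "madd (msmul c s) x m = x m"
      using s by (simp add: madd_def msmul_def lead_term_def)
    then show ?thesis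
      using u by metis
  qed
qed

lemma supp_hcomp: "supp (hcomp g d ed \<delta> u) = {t \<in> supp u. mdeg g d ed t = \<delta>}"
  by (auto simp: hcomp_def supp_def)

lemma mon_vec_eq_minus_lower_terms:
  fixes w :: "mon \<Rightarrow> 'a::comm_ring_1"
  assumes "finite (supp w)" "w m = 1"
  shows "mon_vec m = madd w (msmul (-1) (\<lambda>x. \<Sum>t\<in>supp w - {m}. w t * mon_vec t x))"
proof -
  have "(\<Sum>t\<in>supp w - {m}. w t * mon_vec t x) = (if x \<in> supp w - {m} then w x else 0)" for x
    using assms(1) by (simp add: sum_mon_vec_apply)
  then show ?thesis
    using assms(2) by (auto simp: fun_eq_iff madd_def msmul_def mon_vec_def supp_def)
qed

lemma mon_vec_in_submod_if_in_init_mod: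
  assumes mo: "monomial_order g p mless" and gs: "graded_submod g p d ed U"
    and init: "\<forall>m'\<in>monoms g p. mdeg g d ed m' = \<delta> \<longrightarrow> mon_vec m' \<in> init_mod mless U"
    and m: "m \<in> monoms g p" "mdeg g d ed m = \<delta>"
  shows "mon_vec m \<in> U"
  using m
proof (induction m rule: wf_induct_rule[OF monomial_order_wf[OF mo]])
  case (1 m)
  have U: "submod g p U"
    using gs by (simp add: graded_submod_def)
  obtain u where u: "u \<in> U" "u m = 1" "\<forall>m'\<in>supp u - {m}. mless m' m"
    using init_mod_coeff_witness[OF mo U, of "mon_vec m" m] init 1(2,3)
    by (auto simp: mon_vec_def)
  define w where "w = hcomp g d ed \<delta> u"
  have w: "w \<in> U"
    using gs u(1) unfolding w_def graded_submod_def by blast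
  have "finite (supp u)" "supp u \<subseteq> monoms g p"
    using u(1) U by (auto simp: submod_def freemod_def)
  then have fin: "finite (supp w)" and supp_w: "supp w \<subseteq> {t \<in> supp u. mdeg g d ed t = \<delta>}"
    by (auto simp: w_def supp_hcomp)
  have "mon_vec t \<in> U" if t: "t \<in> supp w - {m}" for t
  proof (rule 1(1))
    show "t \<in> monoms g p" "mdeg g d ed t = \<delta>"
      using t supp_w \<open>supp u \<subseteq> monoms g p\<close> by auto
    show "(t, m) \<in> {(m1, m2). m1 \<in> monoms g p \<and> m2 \<in> monoms g p \<and> mless m1 m2}"
      using t supp_w \<open>supp u \<subseteq> monoms g p\<close> u(3) 1(2) by blast
  qed
  then have "(\<lambda>x. \<Sum>t\<in>supp w - {m}. w t * mon_vec t x) \<in> A0_span U"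
    using fin by (intro A0_span_mon_vec_sum) auto
  then have lower: "(\<lambda>x. \<Sum>t\<in>supp w - {m}. w t * mon_vec t x) \<in> U"
    using A0_span_subset_submod[OF U] by blast
  have "w m = 1"
    using u(2) 1(3) by (simp add: w_def hcomp_def)
  then have "mon_vec m = madd w (msmul (-1) (\<lambda>x. \<Sum>t\<in>supp w - {m}. w t * mon_vec t x))"
    using fin by (rule mon_vec_eq_minus_lower_terms[rotated])
  also have "\<dots> \<in> U"
    using U w lower unfolding submod_def by blast
  finally show ?case .
qed

lemma homog_part_subset_init_mod_iff:
  fixes U :: "(mon \<Rightarrow> 'a::comm_ring_1) set"
  assumes mo: "monomial_order g p mless" and gs: "graded_submod g p d ed U"
  shows "homog_part g p d ed i v \<subseteq> U \<longleftrightarrow> homog_part g p d ed i v \<subseteq> init_mod mless U"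
proof
  assume part: "homog_part g p d ed i v \<subseteq> U"
  have "mon_vec m \<in> {lead_term mless u |u. u \<in> U \<and> u \<noteq> (\<lambda>_. 0)}"
    if "m \<in> monoms g p" "mdeg g d ed m = (i, v)" for m
  proof -
    have "mon_vec m \<in> U"
      using part mon_vec_in_homog_part[OF that] by blast
    then show ?thesis
      using lead_term_mon_vec[of mless m] mon_vec_nonzero[of m] by (metis (mono_tags, lifting) mem_Collect_eq)
  qed
  then show "homog_part g p d ed i v \<subseteq> init_mod mless U"
    unfolding init_mod_def by (intro homog_part_subset_A0_span ballI impI)
next
  assume part: "homog_part g p d ed i v \<subseteq> init_mod mless U"
  have "mon_vec m \<in> U" if "m \<in> monoms g p" "mdeg g d ed m = (i, v)" for m
  proof (rule mon_vec_in_submod_if_in_init_mod[OF mo gs _ that])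
    show "\<forall>m'\<in>monoms g p. mdeg g d ed m' = (i, v) \<longrightarrow> mon_vec m' \<in> init_mod mless U"
      using part mon_vec_in_homog_part by blast
  qed
  then have "homog_part g p d ed i v \<subseteq> A0_span U"
    by (intro homog_part_subset_A0_span ballI impI)
  also have "\<dots> \<subseteq> U"
    using gs by (intro A0_span_subset_submod) (auto simp: graded_submod_def)
  finally show "homog_part g p d ed i v \<subseteq> U" .
qed

theorem lemma3p2:
  fixes g p :: nat and d :: "nat \<Rightarrow> nat" and ed :: "nat \<Rightarrow> int \<times> int"
    and mless :: "mon \<Rightarrow> mon \<Rightarrow> bool"
    and U :: "(mon \<Rightarrow> 'a::comm_ring_1) set"
  assumes "monomial_order g p mless"
    and "graded_submod g p d ed U"
  shows "\<forall>v. rho g p d ed U v = rho g p d ed (init_mod mless U) v"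
proof
  fix v
  have "(\<exists>f. homog g p d ed i v f \<and> f \<notin> U) \<longleftrightarrow> (\<exists>f. homog g p d ed i v f \<and> f \<notin> init_mod mless U)"
    for i
    using homog_part_subset_init_mod_iff[OF assms, of i v] by (auto simp: homog_part_def)
  then show "rho g p d ed U v = rho g p d ed (init_mod mless U) v"
    unfolding rho_def by simp
qed

end
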